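(* Let $\mathcal{X}=\mathcal{Y}=\mathbb{R}$ and let $\ell^{\mathrm{obj}}(y,y')=\ell^{\mathrm{con}}(y,y')=(y-y')^2$. Let $\ell^{\mathrm{a}}:\mathbb{R}\times\mathbb{R}\to\mathbb{R}$ be a p-distance function, i.e. $\ell^{\mathrm{a}}(y,y')\ge 0$ for all $y,y'$, and $\ell^{\mathrm{a}}(y,y')=0$ if and only if $y=y'$. Let $Q$ and $P$ be absolutely continuous probability measures on $\mathbb{R}$ with $\operatorname{supp}(Q)=[a,b]$ and $\operatorname{supp}(P)=[c,d]$, where $a<b\le c<d$. Let $F$ and $H$ be $L$-Lipschitz function spaces (classes of $L$-Lipschitz functions $\mathbb{R}\to\mathbb{R}$), and let $G=\{g:\mathbb{R}\to\mathbb{R}\}$ be the set of all functions. Let $\varepsilon\ge 0$ and $f\in F$. Consider the expected BODAME problem $$\max_{g\in G}\ \mathbb{E}_{X\sim Q}\big[\ell^{\mathrm{obj}}(f(X),h_g(X))\big]$$ subject to $h_g=\operatorname{argmin}_{h\in H}\mathbb{E}_{X\sim P}[\ell^{\mathrm{a}}(g(X),h(X))]$ and $\mathbb{E}_{X\sim Q}[\ell^{\mathrm{con}}(f(X),g(X))]\le\varepsilon$. Then the optimal value of this problem is $\infty$.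
   Context: In this problem a defender with true model $f$ publishes a surrogate model $g$, which must approximate $f$ up to $\varepsilon$ on the defender's distribution $Q$; an attacker fits a model $h_g\in H$ to the outputs of $g$ by minimizing the expected loss $\ell^{\mathrm{a}}$ on the attacker's distribution $P$; the defender maximizes the expected discrepancy between $f$ and $h_g$ on $Q$. "Optimal value is $\infty$" means the supremum of the objective over feasible $g$ is $+\infty$. *)

theory Defs
  imports "HOL-Probability.Probability"
begin

definition measure_support :: "real measure \<Rightarrow> real set" where
  "measure_support M = {x. \<forall>e>0. emeasure M (ball x e) > 0}"

definition lip_space :: "real \<Rightarrow> (real \<Rightarrow> real) set" where
  "lip_space L = {h. L-lipschitz_on UNIV h}"

definition exp_loss :: "real measure \<Rightarrow> (real \<Rightarrow> real \<Rightarrow> real) \<Rightarrow> (real \<Rightarrow> real) \<Rightarrow> (real \<Rightarrow> real) \<Rightarrow> ennreal" where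
  "exp_loss M loss u v = (\<integral>\<^sup>+ x. ennreal (loss (u x) (v x)) \<partial>M)"

definition attacker_argmin :: "(real \<Rightarrow> real) set \<Rightarrow> real measure \<Rightarrow> (real \<Rightarrow> real \<Rightarrow> real) \<Rightarrow> (real \<Rightarrow> real) \<Rightarrow> (real \<Rightarrow> real) set" where
  "attacker_argmin H P la g = {h \<in> H. \<forall>h' \<in> H. exp_loss P la g h \<le> exp_loss P la g h'}"

definition sq_loss :: "real \<Rightarrow> real \<Rightarrow> real" where
  "sq_loss y y' = (y - y')\<^sup>2"

end

theory Submission
  imports Defs
begin

text \<open>The defender publishes \<open>g\<close> equal to \<open>f\<close> on \<open>(-\<infinity>, b]\<close> and to \<open>f + K\<close> on \<open>(b, \<infinity>)\<close>.
  Since \<open>Q\<close> lives on \<open>[a, b]\<close>, \<open>g = f\<close> \<open>Q\<close>-almost everywhere and the constraint costs nothing.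
  Since \<open>P\<close> lives on \<open>[c, d]\<close> and does not charge the point \<open>b\<close>, \<open>g\<close> agrees \<open>P\<close>-almost
  everywhere with the \<open>L\<close>-Lipschitz function \<open>f + K\<close>; as \<open>\<ell>\<^sup>a\<close> is a p-distance, the attacker's
  best responses are exactly the \<open>L\<close>-Lipschitz \<open>h\<close> with \<open>h = f + K\<close> \<open>P\<close>-almost everywhere.
  By continuity such an \<open>h\<close> satisfies \<open>h c = f c + K\<close> at the support point \<open>c\<close>, and the
  Lipschitz bound then keeps \<open>|h - f|\<close> above \<open>K - 2 L (c - a)\<close> on all of \<open>[a, b]\<close>, which
  is as large as we like.\<close>

lemma AE_in_measure_support:
  fixes M :: "real measure"
  assumes "sets M = sets borel"
  shows "AE x in M. x \<in> measure_support M"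
proof -
  define F where "F = {ball x e | x e. e > 0 \<and> emeasure M (ball x e) = 0}"
  have "\<And>S. S \<in> F \<Longrightarrow> open S" by (auto simp: F_def)
  from Lindelof[OF this] obtain F' where F': "F' \<subseteq> F" "countable F'" "\<Union>F' = \<Union>F"
    by blast
  have "(\<Union>B\<in>F'. B) \<in> null_sets M"
  proof (rule null_sets_UN'[OF \<open>countable F'\<close>])
    fix B assume "B \<in> F'"
    then obtain x e where "B = ball x e" "emeasure M (ball x e) = 0"
      using F' unfolding F_def by blast
    then show "B \<in> null_sets M" using assms by (simp add: null_sets_def)
  qed
  then have "\<Union>F' \<in> null_sets M" by simp
  moreover have "{x \<in> space M. x \<notin> measure_support M} \<subseteq> \<Union>F'"
  proof
    fix x assume "x \<in> {x \<in> space M. x \<notin> measure_support M}"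
    then obtain e where "e > 0" "emeasure M (ball x e) = 0"
      by (auto simp: measure_support_def)
    then have "ball x e \<in> F" "x \<in> ball x e" unfolding F_def by auto
    then show "x \<in> \<Union>F'" using F'(3) by blast
  qed
  ultimately show ?thesis by (rule AE_I')
qed

lemma continuous_AE_eq_on_measure_support:
  fixes M :: "real measure" and u v :: "real \<Rightarrow> 'b::t2_space"
  assumes "sets M = sets borel" "continuous_on UNIV u" "continuous_on UNIV v"
    and "AE x in M. u x = v x" and "x \<in> measure_support M"
  shows "u x = v x"
proof (rule ccontr)
  assume "u x \<noteq> v x"
  have "open {y. u y \<noteq> v y}"
    using assms(2,3) by (intro open_Collect_neq) auto
  then obtain e where "e > 0" and ball: "ball x e \<subseteq> {y. u y \<noteq> v y}"
    using \<open>u x \<noteq> v x\<close> unfolding open_contains_ball by blast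
  from assms(4) obtain N where N: "N \<in> null_sets M" "{y \<in> space M. u y \<noteq> v y} \<subseteq> N"
    by (auto simp: eventually_ae_filter)
  have "space M = UNIV" using sets_eq_imp_space_eq[OF assms(1)] by simp
  then have "ball x e \<subseteq> N" using ball N(2) by blast
  then have "emeasure M (ball x e) \<le> emeasure M N"
    using N(1) assms(1) by (intro emeasure_mono) auto
  then have "emeasure M (ball x e) = 0" using N(1) by auto
  then show False using \<open>e > 0\<close> assms(5) by (auto simp: measure_support_def)
qed

lemma lipschitz_on_diff_lower_bound:
  fixes f h :: "'a::metric_space \<Rightarrow> 'b::real_normed_vector"
  assumes "L-lipschitz_on S f" "L-lipschitz_on S h" "x \<in> S" "c \<in> S"
  shows "norm (h c - f c) - 2 * L * dist x c \<le> norm (h x - f x)"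
proof -
  have "norm (h c - h x) \<le> L * dist x c" "norm (f c - f x) \<le> L * dist x c"
    using lipschitz_onD[OF assms(1) assms(3,4)] lipschitz_onD[OF assms(2) assms(3,4)]
    by (simp_all add: dist_norm norm_minus_commute)
  moreover have "norm (h c - f c) \<le> norm (h x - f x) + norm ((h c - h x) - (f c - f x))"
    using norm_triangle_ineq[of "h x - f x" "(h c - h x) - (f c - f x)"] by simp
  moreover have "norm ((h c - h x) - (f c - f x)) \<le> norm (h c - h x) + norm (f c - f x)"
    by (rule norm_triangle_ineq4)
  ultimately show ?thesis by linarith
qed

lemma sq_loss_ge_if_lipschitz_shift:
  fixes f h :: "real \<Rightarrow> real"
  assumes "L-lipschitz_on UNIV f" "L-lipschitz_on UNIV h"
    and "h c = f c + 2 * L * r + s" "\<bar>x - c\<bar> \<le> r" "0 \<le> s"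
  shows "s\<^sup>2 \<le> sq_loss (f x) (h x)"
proof -
  have "0 \<le> L" by (rule lipschitz_on_nonneg[OF assms(1)])
  then have "0 \<le> L * \<bar>x - c\<bar>" "L * \<bar>x - c\<bar> \<le> L * r"
    using assms(4) by (simp_all add: mult_left_mono)
  moreover have "\<bar>h c - f c\<bar> - 2 * L * \<bar>x - c\<bar> \<le> \<bar>h x - f x\<bar>"
    using lipschitz_on_diff_lower_bound[OF assms(1,2), of x c] by (simp add: dist_real_def)
  ultimately have "\<bar>s\<bar> \<le> \<bar>h x - f x\<bar>" using assms(3,5) by simp
  then show ?thesis by (simp add: abs_le_square_iff sq_loss_def power2_commute[of "f x"])
qed

lemma lip_space_borel_measurable: "h \<in> lip_space L \<Longrightarrow> h \<in> borel_measurable borel"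
  by (auto simp: lip_space_def intro: borel_measurable_continuous_onI lipschitz_on_continuous_on)

lemma exp_loss_eq_0_if_AE:
  "AE x in M. loss (u x) (v x) = 0 \<Longrightarrow> exp_loss M loss u v = 0"
  unfolding exp_loss_def by (subst nn_integral_cong_AE[where v = "\<lambda>_. 0"]) auto

lemma exp_loss_eq_0_iff_AE:
  assumes "\<And>y y'. loss y y' \<ge> 0" "(\<lambda>x. loss (u x) (v x)) \<in> borel_measurable M"
  shows "exp_loss M loss u v = 0 \<longleftrightarrow> (AE x in M. loss (u x) (v x) = 0)"
  unfolding exp_loss_def using assms
  by (subst nn_integral_0_iff_AE) (auto simp: ennreal_eq_0_iff intro!: AE_cong order.antisym)

lemma ennreal_le_exp_loss_if_AE:
  assumes "prob_space M" "AE x in M. r \<le> loss (u x) (v x)"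
  shows "ennreal r \<le> exp_loss M loss u v"
proof -
  have "ennreal r = (\<integral>\<^sup>+ x. ennreal r \<partial>M)"
    using prob_space.emeasure_space_1[OF assms(1)] by simp
  also have "\<dots> \<le> exp_loss M loss u v"
    unfolding exp_loss_def
    using assms(2) by (intro nn_integral_mono_AE) (auto intro: ennreal_leI)
  finally show ?thesis .
qed

lemma exp_sq_loss_ge_if_AE_shift:
  fixes f h :: "real \<Rightarrow> real"
  assumes "prob_space Q" "AE x in Q. \<bar>x - c\<bar> \<le> r"
    and "sets P = sets borel" "c \<in> measure_support P"
    and "L-lipschitz_on UNIV f" "L-lipschitz_on UNIV h"
    and "AE x in P. h x = f x + 2 * L * r + s" "0 \<le> s"
  shows "ennreal (s\<^sup>2) \<le> exp_loss Q sq_loss f h"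
proof -
  have "continuous_on UNIV h" "continuous_on UNIV (\<lambda>x. f x + 2 * L * r + s)"
    using assms(5,6) by (auto intro!: continuous_intros intro: lipschitz_on_continuous_on)
  then have "h c = f c + 2 * L * r + s"
    using continuous_AE_eq_on_measure_support[OF assms(3) _ _ assms(7,4)] by blast
  then show ?thesis
    using assms(2,8) sq_loss_ge_if_lipschitz_shift[OF assms(5,6)]
    by (intro ennreal_le_exp_loss_if_AE[OF assms(1)]) auto
qed

lemma attacker_argmin_eq_AE_eq:
  fixes la :: "real \<Rightarrow> real \<Rightarrow> real"
  assumes la_nonneg: "\<And>y y'. la y y' \<ge> 0"
    and la_zero: "\<And>y y'. la y y' = 0 \<longleftrightarrow> y = y'"
    and la_meas: "(\<lambda>(y, y'). la y y') \<in> borel_measurable borel"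
    and P_sets: "sets P = sets borel"
    and g_meas: "g \<in> borel_measurable borel" and H_meas: "H \<subseteq> borel_measurable borel"
    and h\<^sub>0: "h\<^sub>0 \<in> H" "AE x in P. g x = h\<^sub>0 x"
  shows "attacker_argmin H P la g = {h \<in> H. AE x in P. g x = h x}"
proof -
  have loss_0_iff: "exp_loss P la g h = 0 \<longleftrightarrow> (AE x in P. g x = h x)" if "h \<in> H" for h
  proof -
    have "(\<lambda>x. la (g x) (h x)) \<in> borel_measurable borel"
      using measurable_compose[OF borel_measurable_Pair[OF g_meas] la_meas] that H_meas by auto
    then have "(\<lambda>x. la (g x) (h x)) \<in> borel_measurable P"
      by (subst measurable_cong_sets[OF P_sets refl])
    then show ?thesis by (simp add: exp_loss_eq_0_iff_AE la_nonneg la_zero)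
  qed
  then have "exp_loss P la g h\<^sub>0 = 0" using h\<^sub>0 by blast
  then have "exp_loss P la g h \<le> exp_loss P la g h\<^sub>0 \<longleftrightarrow> exp_loss P la g h = 0" for h
    by simp
  then show ?thesis
    using loss_0_iff h\<^sub>0(1) unfolding attacker_argmin_def by fastforce
qed

theorem theorem2:
  fixes la :: "real \<Rightarrow> real \<Rightarrow> real"
    and Q P :: "real measure"
    and a b c d L \<epsilon> :: real
    and f :: "real \<Rightarrow> real"
  assumes la_nonneg: "\<And>y y'. la y y' \<ge> 0"
    and la_zero: "\<And>y y'. la y y' = 0 \<longleftrightarrow> y = y'"
    and la_meas: "(\<lambda>(y, y'). la y y') \<in> borel_measurable borel"
    and Q_prob: "prob_space Q" and Q_sets: "sets Q = sets borel"
    and Q_ac: "absolutely_continuous lborel Q"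
    and P_prob: "prob_space P" and P_sets: "sets P = sets borel"
    and P_ac: "absolutely_continuous lborel P"
    and Q_supp: "measure_support Q = {a..b}"
    and P_supp: "measure_support P = {c..d}"
    and abcd: "a < b" "b \<le> c" "c < d"
    and eps: "\<epsilon> \<ge> 0"
    and f_in: "f \<in> lip_space L"
  shows "\<forall>M::real. \<exists>g :: real \<Rightarrow> real.
           exp_loss Q sq_loss f g \<le> ennreal \<epsilon>
         \<and> attacker_argmin (lip_space L) P la g \<noteq> {}
         \<and> (\<forall>h \<in> attacker_argmin (lip_space L) P la g. exp_loss Q sq_loss f h > ennreal M)"
proof
  fix M :: real
  define s where "s = sqrt \<bar>M\<bar> + 1"
  have s: "0 < s" "M < s\<^sup>2"
    using real_sqrt_ge_zero[OF abs_ge_zero[of M]] abs_ge_self[of M]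
    unfolding s_def power2_sum real_sqrt_pow2[OF abs_ge_zero] power_one mult_1_right by linarith+
  define h\<^sub>0 where "h\<^sub>0 x = f x + 2 * L * (c - a) + s" for x
  define g where "g x = f x + (2 * L * (c - a) + s) * indicator {b<..} x" for x
  have f_lip: "L-lipschitz_on UNIV f" using f_in by (simp add: lip_space_def)
  have h\<^sub>0_lip: "h\<^sub>0 \<in> lip_space L"
    using lipschitz_on_add[OF f_lip lipschitz_on_constant]
    by (simp add: lip_space_def h\<^sub>0_def add.assoc)
  have g_meas: "g \<in> borel_measurable borel"
    unfolding g_def using lip_space_borel_measurable[OF f_in] by measurable
  have Q_a_b: "AE x in Q. x \<in> {a..b}" using AE_in_measure_support[OF Q_sets] Q_supp by simp
  then have g_cost: "exp_loss Q sq_loss f g = 0"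
    by (intro exp_loss_eq_0_if_AE eventually_mono[OF Q_a_b]) (simp add: sq_loss_def g_def)
  have "{b} \<in> null_sets lborel" by (simp add: null_sets_def)
  then have "{b} \<in> null_sets P" using P_ac unfolding absolutely_continuous_def by blast
  then have "AE x in P. x \<in> {c..d} \<and> x \<noteq> b"
    using AE_in_measure_support[OF P_sets] AE_not_in[of "{b}" P] P_supp by auto
  then have g_h\<^sub>0: "AE x in P. g x = h\<^sub>0 x"
    by eventually_elim (use abcd in \<open>auto simp: g_def h\<^sub>0_def\<close>)
  then have best_responses:
    "attacker_argmin (lip_space L) P la g = {h \<in> lip_space L. AE x in P. g x = h x}"
    using g_meas h\<^sub>0_lip lip_space_borel_measurable
    by (intro attacker_argmin_eq_AE_eq[OF la_nonneg la_zero la_meas P_sets]) auto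
  have "ennreal M < exp_loss Q sq_loss f h" if "h \<in> attacker_argmin (lip_space L) P la g" for h
  proof -
    have "L-lipschitz_on UNIV h" "AE x in P. h x = f x + 2 * L * (c - a) + s"
      using that best_responses g_h\<^sub>0 by (auto simp: lip_space_def h\<^sub>0_def)
    moreover have "AE x in Q. \<bar>x - c\<bar> \<le> c - a" using Q_a_b abcd by (auto elim: eventually_mono)
    ultimately have "ennreal (s\<^sup>2) \<le> exp_loss Q sq_loss f h"
      using P_supp abcd s by (intro exp_sq_loss_ge_if_AE_shift[OF Q_prob _ P_sets _ f_lip]) auto
    moreover have "ennreal M < ennreal (s\<^sup>2)" using s by (intro ennreal_lessI) auto
    ultimately show ?thesis by order
  qed
  then show "\<exists>g. exp_loss Q sq_loss f g \<le> ennreal \<epsilon>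
         \<and> attacker_argmin (lip_space L) P la g \<noteq> {}
         \<and> (\<forall>h \<in> attacker_argmin (lip_space L) P la g. exp_loss Q sq_loss f h > ennreal M)"
    using g_cost best_responses h\<^sub>0_lip g_h\<^sub>0 by (intro exI[of _ g]) auto
qed

end
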